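(* Let $L=E[C_1,\dots,C_n]$ be a congruence uniform lattice, i.e. each $C_i$ is an interval of $E[C_1,\dots,C_{i-1}]$. Then $L$ is left modular if and only if, for every $i\in[n]$, $C_i$ contains an element of the spine of $E[C_1,\dots,C_{i-1}]$.
   Context: All lattices are finite. For a convex subset $C$ of a lattice $L$, let $I_L(C)=\{y\in L\mid\exists x\in C,\ y\le x\}$, and the doubling $L[C]$ is the subposet of $L\times\{0<1\}$ on $\big(I_L(C)\times\{0\}\big)\sqcup\big(((L\setminus I_L(C))\cup C)\times\{1\}\big)$. $E[\,]$ is the one-element lattice and $E[C_1,\dots,C_{i+1}]:=E[C_1,\dots,C_i][C_{i+1}]$ with $C_{i+1}$ a nonempty interval of $E[C_1,\dots,C_i]$. The spine of a poset is the set of elements lying on some chain of maximum length. An element $a$ is left modular if for all $b<c$, $(b\vee a)\wedge c=b\vee(a\wedge c)$; a lattice is left modular if it has a maximal chain consisting of left modular elements. *)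

theory Defs
  imports Main
begin

type_synonym 'a poset = "'a set \<times> ('a \<Rightarrow> 'a \<Rightarrow> bool)"

definition carrier :: "'a poset \<Rightarrow> 'a set" where "carrier P = fst P"
definition leq :: "'a poset \<Rightarrow> 'a \<Rightarrow> 'a \<Rightarrow> bool" where "leq P = snd P"

definition pjoin :: "'a poset \<Rightarrow> 'a \<Rightarrow> 'a \<Rightarrow> 'a" where
  "pjoin P x y = (THE z. z \<in> carrier P \<and> leq P x z \<and> leq P y z \<and>
      (\<forall>w\<in>carrier P. leq P x w \<and> leq P y w \<longrightarrow> leq P z w))"

definition pmeet :: "'a poset \<Rightarrow> 'a \<Rightarrow> 'a \<Rightarrow> 'a" where
  "pmeet P x y = (THE z. z \<in> carrier P \<and> leq P z x \<and> leq P z y \<and>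
      (\<forall>w\<in>carrier P. leq P w x \<and> leq P w y \<longrightarrow> leq P w z))"

definition is_chain :: "'a poset \<Rightarrow> 'a set \<Rightarrow> bool" where
  "is_chain P S \<longleftrightarrow> S \<subseteq> carrier P \<and> (\<forall>x\<in>S. \<forall>y\<in>S. leq P x y \<or> leq P y x)"

definition maximal_chain :: "'a poset \<Rightarrow> 'a set \<Rightarrow> bool" where
  "maximal_chain P S \<longleftrightarrow> is_chain P S \<and> (\<forall>T. is_chain P T \<and> S \<subseteq> T \<longrightarrow> T = S)"

definition spine :: "'a poset \<Rightarrow> 'a set" where
  "spine P = \<Union>{S. is_chain P S \<and> (\<forall>T. is_chain P T \<longrightarrow> card T \<le> card S)}"

definition left_modular_elem :: "'a poset \<Rightarrow> 'a \<Rightarrow> bool" where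
  "left_modular_elem P a \<longleftrightarrow> a \<in> carrier P \<and>
     (\<forall>b\<in>carrier P. \<forall>c\<in>carrier P. leq P b c \<and> b \<noteq> c \<longrightarrow>
        pmeet P (pjoin P b a) c = pjoin P b (pmeet P a c))"

definition left_modular :: "'a poset \<Rightarrow> bool" where
  "left_modular P \<longleftrightarrow> (\<exists>S. maximal_chain P S \<and> (\<forall>a\<in>S. left_modular_elem P a))"

definition is_interval :: "'a poset \<Rightarrow> 'a set \<Rightarrow> bool" where
  "is_interval P C \<longleftrightarrow> (\<exists>a\<in>carrier P. \<exists>b\<in>carrier P. leq P a b \<and>
      C = {z\<in>carrier P. leq P a z \<and> leq P z b})"

definition down_of :: "'a poset \<Rightarrow> 'a set \<Rightarrow> 'a set" where
  "down_of P C = {y\<in>carrier P. \<exists>x\<in>C. leq P y x}"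

text \<open>Doubling. Elements of L \<times> {0<1} are encoded as lists x @ [b], where x is
  the element of L and b is the second coordinate (False = 0, True = 1);
  the order is the product order.\<close>
definition double :: "bool list poset \<Rightarrow> bool list set \<Rightarrow> bool list poset" where
  "double P C =
     ((\<lambda>x. x @ [False]) ` down_of P C \<union>
      (\<lambda>x. x @ [True]) ` ((carrier P - down_of P C) \<union> C),
      \<lambda>x y. leq P (butlast x) (butlast y) \<and> (last x \<longrightarrow> last y))"

definition E_seq :: "bool list set list \<Rightarrow> bool list poset" where
  "E_seq Cs = foldl double ({[]}, \<lambda>x y. True) Cs"

definition valid_seq :: "bool list set list \<Rightarrow> bool" where
  "valid_seq Cs \<longleftrightarrow> (\<forall>i<length Cs. is_interval (E_seq (take i Cs)) (Cs ! i) \<and> Cs ! i \<noteq> {})"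

end

theory Submission
  imports Defs
begin

text \<open>
  Two facts drive an induction on \<open>n\<close>. First, in a finite lattice a maximal chain \<open>M\<close> of
  left modular elements has maximum length: if \<open>m'\<close> is the lower neighbour of \<open>m\<close> in \<open>M\<close>,
  the maps \<open>y \<mapsto> y \<curlywedge> m'\<close> and \<open>y \<mapsto> y \<curlyvee> m'\<close> are monotone and, by the modular law,
  jointly injective on any chain \<open>Y\<close> below \<open>m\<close>; the second takes only the values \<open>m'\<close> and
  \<open>m\<close>, so induction along \<open>M\<close> gives \<open>|Y| \<le> |{x \<in> M. x \<le> m}|\<close>.

  Second, let \<open>C = [a, b]\<close>. Chains of \<open>L[C]\<close> project to chains of \<open>L\<close> losing at most the
  one pair \<open>(x, 0) < (x, 1)\<close> they may contain, left modular elements of \<open>L[C]\<close> project to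
  left modular elements of \<open>L\<close>, and a left modular \<open>x\<close> of \<open>L\<close> lifts to the left modular
  element \<open>(x, 0)\<close> if \<open>x \<le> b\<close> and \<open>(x, 1)\<close> if \<open>a \<le> x\<close>. So a maximum chain of \<open>L\<close>
  through \<open>w \<in> C\<close> lifts to a longer left modular chain of \<open>L[C]\<close>; conversely a left modular
  maximal chain of \<open>L[C]\<close> must contain a pair \<open>(w, 0) < (w, 1)\<close> with \<open>w \<in> C\<close>, and its
  projection is a left modular, hence maximum, chain of \<open>L\<close> through \<open>w\<close>. The induction
  carries the invariant that in a left modular \<open>E[C\<^sub>1, \<dots>, C\<^sub>i]\<close> every element of the
  spine is left modular.
\<close>

lemma pjoin_eqI:
  assumes "\<And>u v. u \<in> carrier P \<Longrightarrow> v \<in> carrier P \<Longrightarrow> leq P u v \<Longrightarrow> leq P v u \<Longrightarrow> u = v"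
    and "z \<in> carrier P" "leq P x z" "leq P y z"
    and "\<forall>w\<in>carrier P. leq P x w \<and> leq P y w \<longrightarrow> leq P z w"
  shows "pjoin P x y = z"
  unfolding pjoin_def by (rule the_equality) (use assms in blast)+

lemma pmeet_eqI:
  assumes "\<And>u v. u \<in> carrier P \<Longrightarrow> v \<in> carrier P \<Longrightarrow> leq P u v \<Longrightarrow> leq P v u \<Longrightarrow> u = v"
    and "z \<in> carrier P" "leq P z x" "leq P z y"
    and "\<forall>w\<in>carrier P. leq P w x \<and> leq P w y \<longrightarrow> leq P w z"
  shows "pmeet P x y = z"
  unfolding pmeet_def by (rule the_equality) (use assms in blast)+

definition maximum_chain :: "'a poset \<Rightarrow> 'a set \<Rightarrow> bool" where
  "maximum_chain P S \<longleftrightarrow> is_chain P S \<and> (\<forall>T. is_chain P T \<longrightarrow> card T \<le> card S)"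

lemma spine_iff: "x \<in> spine P \<longleftrightarrow> (\<exists>S. maximum_chain P S \<and> x \<in> S)"
  unfolding spine_def maximum_chain_def by blast

lemma maximum_chain_subset_spine: "maximum_chain P S \<Longrightarrow> S \<subseteq> spine P"
  unfolding spine_def maximum_chain_def by blast

lemma is_chain_subset: "is_chain P S \<Longrightarrow> T \<subseteq> S \<Longrightarrow> is_chain P T"
  unfolding is_chain_def by blast

lemma finite_directed_has_upper_bound:
  assumes "finite S" "S \<noteq> {}" "S \<subseteq> A"
    and directed: "\<And>x y. x \<in> A \<Longrightarrow> y \<in> A \<Longrightarrow> \<exists>z\<in>A. r x z \<and> r y z"
    and trans: "\<And>x y z. x \<in> A \<Longrightarrow> y \<in> A \<Longrightarrow> z \<in> A \<Longrightarrow> r x y \<Longrightarrow> r y z \<Longrightarrow> r x z"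
  shows "\<exists>z\<in>A. \<forall>x\<in>S. r x z"
  using assms(1-3)
proof (induction S rule: finite_ne_induct)
  case (singleton x)
  then show ?case using directed[of x x] by blast
next
  case (insert x F)
  then obtain m where m: "m \<in> A" "\<forall>y\<in>F. r y m" by blast
  moreover obtain z where "z \<in> A" "r x z" "r m z"
    using directed[of x m] insert.prems m(1) by blast
  ultimately show ?case using trans insert.prems by blast
qed

locale finite_lattice =
  fixes L :: "'a poset"
  assumes finite_carrier: "finite (carrier L)"
    and carrier_nonempty: "carrier L \<noteq> {}"
    and refl: "x \<in> carrier L \<Longrightarrow> leq L x x"
    and antisym: "x \<in> carrier L \<Longrightarrow> y \<in> carrier L \<Longrightarrow> leq L x y \<Longrightarrow> leq L y x \<Longrightarrow> x = y"
    and trans: "x \<in> carrier L \<Longrightarrow> y \<in> carrier L \<Longrightarrow> z \<in> carrier L \<Longrightarrow>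
      leq L x y \<Longrightarrow> leq L y z \<Longrightarrow> leq L x z"
    and join_exists: "x \<in> carrier L \<Longrightarrow> y \<in> carrier L \<Longrightarrow>
      \<exists>z\<in>carrier L. leq L x z \<and> leq L y z \<and> (\<forall>w\<in>carrier L. leq L x w \<and> leq L y w \<longrightarrow> leq L z w)"
    and meet_exists: "x \<in> carrier L \<Longrightarrow> y \<in> carrier L \<Longrightarrow>
      \<exists>z\<in>carrier L. leq L z x \<and> leq L z y \<and> (\<forall>w\<in>carrier L. leq L w x \<and> leq L w y \<longrightarrow> leq L w z)"
begin

abbreviation le (infix \<open>\<sqsubseteq>\<close> 50) where "x \<sqsubseteq> y \<equiv> leq L x y"
abbreviation join (infixl \<open>\<curlyvee>\<close> 65) where "x \<curlyvee> y \<equiv> pjoin L x y"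
abbreviation meet (infixl \<open>\<curlywedge>\<close> 70) where "x \<curlywedge> y \<equiv> pmeet L x y"

lemma join_props:
  assumes "x \<in> carrier L" "y \<in> carrier L"
  shows "x \<curlyvee> y \<in> carrier L \<and> x \<sqsubseteq> x \<curlyvee> y \<and> y \<sqsubseteq> x \<curlyvee> y \<and>
    (\<forall>w\<in>carrier L. x \<sqsubseteq> w \<and> y \<sqsubseteq> w \<longrightarrow> x \<curlyvee> y \<sqsubseteq> w)"
proof -
  obtain z where "z \<in> carrier L" "x \<sqsubseteq> z" "y \<sqsubseteq> z" "\<forall>w\<in>carrier L. x \<sqsubseteq> w \<and> y \<sqsubseteq> w \<longrightarrow> z \<sqsubseteq> w"
    using join_exists[OF assms] by blast
  moreover from this have "x \<curlyvee> y = z" by (intro pjoin_eqI antisym)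
  ultimately show ?thesis by simp
qed

lemma meet_props:
  assumes "x \<in> carrier L" "y \<in> carrier L"
  shows "x \<curlywedge> y \<in> carrier L \<and> x \<curlywedge> y \<sqsubseteq> x \<and> x \<curlywedge> y \<sqsubseteq> y \<and>
    (\<forall>w\<in>carrier L. w \<sqsubseteq> x \<and> w \<sqsubseteq> y \<longrightarrow> w \<sqsubseteq> x \<curlywedge> y)"
proof -
  obtain z where "z \<in> carrier L" "z \<sqsubseteq> x" "z \<sqsubseteq> y" "\<forall>w\<in>carrier L. w \<sqsubseteq> x \<and> w \<sqsubseteq> y \<longrightarrow> w \<sqsubseteq> z"
    using meet_exists[OF assms] by blast
  moreover from this have "x \<curlywedge> y = z" by (intro pmeet_eqI antisym)
  ultimately show ?thesis by simp
qed

lemma join_closed: "x \<in> carrier L \<Longrightarrow> y \<in> carrier L \<Longrightarrow> x \<curlyvee> y \<in> carrier L"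
  using join_props by blast
lemma join_upper1: "x \<in> carrier L \<Longrightarrow> y \<in> carrier L \<Longrightarrow> x \<sqsubseteq> x \<curlyvee> y"
  using join_props by blast
lemma join_upper2: "x \<in> carrier L \<Longrightarrow> y \<in> carrier L \<Longrightarrow> y \<sqsubseteq> x \<curlyvee> y"
  using join_props by blast
lemma join_le_iff:
  "x \<in> carrier L \<Longrightarrow> y \<in> carrier L \<Longrightarrow> w \<in> carrier L \<Longrightarrow> x \<curlyvee> y \<sqsubseteq> w \<longleftrightarrow> x \<sqsubseteq> w \<and> y \<sqsubseteq> w"
  using join_props trans by metis

lemma meet_closed: "x \<in> carrier L \<Longrightarrow> y \<in> carrier L \<Longrightarrow> x \<curlywedge> y \<in> carrier L"
  using meet_props by blast
lemma meet_lower1: "x \<in> carrier L \<Longrightarrow> y \<in> carrier L \<Longrightarrow> x \<curlywedge> y \<sqsubseteq> x"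
  using meet_props by blast
lemma meet_lower2: "x \<in> carrier L \<Longrightarrow> y \<in> carrier L \<Longrightarrow> x \<curlywedge> y \<sqsubseteq> y"
  using meet_props by blast
lemma le_meet_iff:
  "x \<in> carrier L \<Longrightarrow> y \<in> carrier L \<Longrightarrow> w \<in> carrier L \<Longrightarrow> w \<sqsubseteq> x \<curlywedge> y \<longleftrightarrow> w \<sqsubseteq> x \<and> w \<sqsubseteq> y"
  using meet_props trans by metis

lemma join_commute: "x \<in> carrier L \<Longrightarrow> y \<in> carrier L \<Longrightarrow> x \<curlyvee> y = y \<curlyvee> x"
  by (meson antisym join_closed join_le_iff join_upper1 join_upper2)
lemma meet_commute: "x \<in> carrier L \<Longrightarrow> y \<in> carrier L \<Longrightarrow> x \<curlywedge> y = y \<curlywedge> x"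
  by (meson antisym meet_closed le_meet_iff meet_lower1 meet_lower2)
lemma join_absorb2: "x \<in> carrier L \<Longrightarrow> y \<in> carrier L \<Longrightarrow> x \<sqsubseteq> y \<Longrightarrow> x \<curlyvee> y = y"
  by (meson antisym join_closed join_le_iff join_upper2 refl)
lemma meet_absorb1: "x \<in> carrier L \<Longrightarrow> y \<in> carrier L \<Longrightarrow> x \<sqsubseteq> y \<Longrightarrow> x \<curlywedge> y = x"
  by (meson antisym meet_closed le_meet_iff meet_lower1 refl)

lemma join_mono_left:
  "x \<in> carrier L \<Longrightarrow> y \<in> carrier L \<Longrightarrow> m \<in> carrier L \<Longrightarrow> x \<sqsubseteq> y \<Longrightarrow> x \<curlyvee> m \<sqsubseteq> y \<curlyvee> m"
  by (meson join_closed join_le_iff join_upper1 join_upper2 refl trans)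
lemma meet_mono_left:
  "x \<in> carrier L \<Longrightarrow> y \<in> carrier L \<Longrightarrow> m \<in> carrier L \<Longrightarrow> x \<sqsubseteq> y \<Longrightarrow> x \<curlywedge> m \<sqsubseteq> y \<curlywedge> m"
  by (meson meet_closed le_meet_iff meet_lower1 meet_lower2 refl trans)

lemma left_modular_elemD:
  assumes "left_modular_elem L m" "p \<in> carrier L" "q \<in> carrier L" "p \<sqsubseteq> q"
  shows "(p \<curlyvee> m) \<curlywedge> q = p \<curlyvee> (m \<curlywedge> q)"
proof (cases "p = q")
  case True
  have "m \<in> carrier L" using assms(1) unfolding left_modular_elem_def by blast
  then show ?thesis using True assms(2)
    by (metis join_absorb2 join_closed join_commute join_upper1 meet_absorb1 meet_closed
        meet_commute meet_lower2)
next
  case False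
  then show ?thesis using assms unfolding left_modular_elem_def by blast
qed

lemma left_modular_elem_separates:
  assumes "left_modular_elem L m" "u \<in> carrier L" "v \<in> carrier L" "u \<sqsubseteq> v"
    and "u \<curlywedge> m = v \<curlywedge> m" "u \<curlyvee> m = v \<curlyvee> m"
  shows "u = v"
proof -
  have m: "m \<in> carrier L" using assms(1) unfolding left_modular_elem_def by blast
  have vm: "v \<curlyvee> m \<in> carrier L" "v \<sqsubseteq> v \<curlyvee> m" using join_closed join_upper1 assms(3) m by auto
  have um: "u \<curlywedge> m \<in> carrier L" "u \<curlywedge> m \<sqsubseteq> u" using meet_closed meet_lower1 assms(2) m by auto
  have "v = (v \<curlyvee> m) \<curlywedge> v"
    using meet_commute[OF vm(1) assms(3)] meet_absorb1[OF assms(3) vm] by simp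
  also have "\<dots> = u \<curlyvee> (m \<curlywedge> v)"
    using left_modular_elemD[OF assms(1-4)] assms(6) by simp
  also have "\<dots> = u \<curlyvee> (u \<curlywedge> m)"
    using meet_commute[OF m assms(3)] assms(5) by simp
  also have "\<dots> = u"
    using join_commute[OF assms(2) um(1)] join_absorb2[OF um(1) assms(2) um(2)] by simp
  finally show ?thesis ..
qed

lemma chain_subset_carrier: "is_chain L S \<Longrightarrow> S \<subseteq> carrier L"
  unfolding is_chain_def by blast

lemma chain_comparable: "is_chain L S \<Longrightarrow> x \<in> S \<Longrightarrow> y \<in> S \<Longrightarrow> x \<sqsubseteq> y \<or> y \<sqsubseteq> x"
  unfolding is_chain_def by blast

lemma chain_finite: "is_chain L S \<Longrightarrow> finite S"
  using chain_subset_carrier finite_carrier finite_subset by blast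

lemma chain_has_greatest:
  assumes "is_chain L S" "S \<noteq> {}"
  shows "\<exists>x\<in>S. \<forall>y\<in>S. y \<sqsubseteq> x"
  using chain_finite[OF assms(1)] assms(2) subset_refl
proof (rule finite_directed_has_upper_bound)
  have S: "S \<subseteq> carrier L" using assms(1) by (rule chain_subset_carrier)
  show "\<exists>z\<in>S. x \<sqsubseteq> z \<and> y \<sqsubseteq> z" if "x \<in> S" "y \<in> S" for x y
    using that chain_comparable[OF assms(1)] refl S by blast
  show "x \<sqsubseteq> z" if "x \<in> S" "y \<in> S" "z \<in> S" "x \<sqsubseteq> y" "y \<sqsubseteq> z" for x y z
    using that S trans by (meson subsetD)
qed

lemma chain_has_least:
  assumes "is_chain L S" "S \<noteq> {}"
  shows "\<exists>x\<in>S. \<forall>y\<in>S. x \<sqsubseteq> y"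
  using chain_finite[OF assms(1)] assms(2) subset_refl
proof (rule finite_directed_has_upper_bound[where r = "\<lambda>x y. y \<sqsubseteq> x"])
  have S: "S \<subseteq> carrier L" using assms(1) by (rule chain_subset_carrier)
  show "\<exists>z\<in>S. z \<sqsubseteq> x \<and> z \<sqsubseteq> y" if "x \<in> S" "y \<in> S" for x y
    using that chain_comparable[OF assms(1)] refl S by blast
  show "z \<sqsubseteq> x" if "x \<in> S" "y \<in> S" "z \<in> S" "y \<sqsubseteq> x" "z \<sqsubseteq> y" for x y z
    using that S trans by (meson subsetD)
qed

lemma has_top: "\<exists>t\<in>carrier L. \<forall>x\<in>carrier L. x \<sqsubseteq> t"
  using finite_carrier carrier_nonempty subset_refl
proof (rule finite_directed_has_upper_bound)
  show "\<exists>z\<in>carrier L. x \<sqsubseteq> z \<and> y \<sqsubseteq> z" if "x \<in> carrier L" "y \<in> carrier L" for x y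
    using that join_closed join_upper1 join_upper2 by blast
qed (rule trans)

lemma has_bottom: "\<exists>t\<in>carrier L. \<forall>x\<in>carrier L. t \<sqsubseteq> x"
  using finite_carrier carrier_nonempty subset_refl
proof (rule finite_directed_has_upper_bound[where r = "\<lambda>x y. y \<sqsubseteq> x"])
  show "\<exists>z\<in>carrier L. z \<sqsubseteq> x \<and> z \<sqsubseteq> y" if "x \<in> carrier L" "y \<in> carrier L" for x y
    using that meet_closed meet_lower1 meet_lower2 by blast
qed (rule trans)

lemma maximal_chain_insert:
  assumes "maximal_chain L M" "z \<in> carrier L" "\<forall>x\<in>M. x \<sqsubseteq> z \<or> z \<sqsubseteq> x"
  shows "z \<in> M"
proof -
  have "is_chain L (insert z M)"
    using assms refl unfolding maximal_chain_def is_chain_def by blast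
  then show ?thesis using assms(1) unfolding maximal_chain_def by blast
qed

lemma maximal_chain_between:
  assumes "maximal_chain L M" "p \<in> M" "q \<in> M" "\<forall>x\<in>M. x \<sqsubseteq> p \<or> q \<sqsubseteq> x"
    and "z \<in> carrier L" "p \<sqsubseteq> z" "z \<sqsubseteq> q"
  shows "z \<in> M"
proof (rule maximal_chain_insert[OF assms(1,5)])
  have "M \<subseteq> carrier L" using assms(1) chain_subset_carrier unfolding maximal_chain_def by blast
  then show "\<forall>x\<in>M. x \<sqsubseteq> z \<or> z \<sqsubseteq> x"
    using assms(2-7) trans by (meson subsetD)
qed

lemma maximal_chain_least:
  assumes "maximal_chain L M" "z \<in> carrier L" "\<forall>x\<in>carrier L. z \<sqsubseteq> x"
  shows "z \<in> M"
  using assms maximal_chain_insert chain_subset_carrier unfolding maximal_chain_def by blast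

lemma maximal_chain_greatest:
  assumes "maximal_chain L M" "z \<in> carrier L" "\<forall>x\<in>carrier L. x \<sqsubseteq> z"
  shows "z \<in> M"
  using assms maximal_chain_insert chain_subset_carrier unfolding maximal_chain_def by blast

lemma maximum_chain_imp_maximal: "maximum_chain L S \<Longrightarrow> maximal_chain L S"
  unfolding maximal_chain_def maximum_chain_def
  by (metis card_seteq chain_finite)

section \<open>Left modular maximal chains have maximum length\<close>

lemma is_chain_image:
  assumes "is_chain L Y" "f ` Y \<subseteq> carrier L" "\<And>u v. u \<in> Y \<Longrightarrow> v \<in> Y \<Longrightarrow> u \<sqsubseteq> v \<Longrightarrow> f u \<sqsubseteq> f v"
  shows "is_chain L (f ` Y)"
  using assms unfolding is_chain_def by blast

text \<open>Along a chain each step changes \<open>f\<close> or \<open>g\<close>, and by monotonicity a changed value never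
  recurs; so the two images together have at least one element more than the chain.\<close>
lemma card_chain_le_card_images:
  assumes "is_chain L Y" "Y \<noteq> {}" "f ` Y \<subseteq> carrier L" "g ` Y \<subseteq> carrier L"
    and "\<And>u v. u \<in> Y \<Longrightarrow> v \<in> Y \<Longrightarrow> u \<sqsubseteq> v \<Longrightarrow> f u \<sqsubseteq> f v \<and> g u \<sqsubseteq> g v"
    and "\<And>u v. u \<in> Y \<Longrightarrow> v \<in> Y \<Longrightarrow> u \<sqsubseteq> v \<Longrightarrow> f u = f v \<Longrightarrow> g u = g v \<Longrightarrow> u = v"
  shows "card Y + 1 \<le> card (f ` Y) + card (g ` Y)"
  using assms
proof (induction "card Y" arbitrary: Y rule: less_induct)
  case less
  note mono = less.prems(5) and sep = less.prems(6)
  obtain v where v: "v \<in> Y" "\<forall>y\<in>Y. y \<sqsubseteq> v" using chain_has_greatest less.prems(1,2) by blast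
  show ?case
  proof (cases "Y = {v}")
    case True
    then show ?thesis by simp
  next
    case False
    define Y0 where "Y0 = Y - {v}"
    have Y: "Y = insert v Y0" "v \<notin> Y0" using v(1) Y0_def by auto
    have Y0: "is_chain L Y0" "Y0 \<noteq> {}" "finite Y0"
      using is_chain_subset[OF less.prems(1)] False v(1) chain_finite unfolding Y0_def by auto
    have card_Y: "card Y = card Y0 + 1" using Y Y0(3) by simp
    have IH: "card Y0 + 1 \<le> card (f ` Y0) + card (g ` Y0)"
      using less.hyps[of Y0] less.prems Y0 card_Y Y by auto
    obtain u where u: "u \<in> Y0" "\<forall>y\<in>Y0. y \<sqsubseteq> u" using chain_has_greatest Y0 by blast
    have uv: "u \<in> Y" "u \<sqsubseteq> v" using u(1) v(2) Y by auto
    have unchanged: "h v = h u" if hv: "h v \<in> h ` Y0" and h: "h ` Y \<subseteq> carrier L"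
      "\<And>a b. a \<in> Y \<Longrightarrow> b \<in> Y \<Longrightarrow> a \<sqsubseteq> b \<Longrightarrow> h a \<sqsubseteq> h b" for h
    proof -
      obtain u1 where "u1 \<in> Y0" "h v = h u1" using hv by blast
      then have "h v \<sqsubseteq> h u" using h(2)[of u1 u] u(2) Y(1) uv(1) by auto
      moreover have "h u \<sqsubseteq> h v" using h(2)[OF uv(1) v(1) uv(2)] .
      ultimately show ?thesis using antisym h(1) uv(1) v(1) by blast
    qed
    have "f v = f u" if "f v \<in> f ` Y0" using unchanged[OF that less.prems(3)] mono by blast
    moreover have "g v = g u" if "g v \<in> g ` Y0" using unchanged[OF that less.prems(4)] mono by blast
    ultimately have "f v \<notin> f ` Y0 \<or> g v \<notin> g ` Y0"
      using sep[OF uv(1) v(1) uv(2)] u(1) Y(2) by metis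
    then have "card (f ` Y0) + card (g ` Y0) + 1 \<le> card (f ` Y) + card (g ` Y)"
      using Y(1) Y0(3) by (auto simp: card_insert_if)
    then show ?thesis using IH card_Y by linarith
  qed
qed

text \<open>Consecutive elements of a maximal chain form a covering pair.\<close>
lemma join_lower_cover_cases:
  assumes "maximal_chain L M" "m \<in> M" "m' \<in> M" "m' \<sqsubseteq> m"
    and cover: "\<forall>x\<in>M. x \<sqsubseteq> m \<longrightarrow> x = m \<or> x \<sqsubseteq> m'"
    and "y \<in> carrier L" "y \<sqsubseteq> m"
  shows "y \<curlyvee> m' = m' \<or> y \<curlyvee> m' = m"
proof -
  have M: "is_chain L M" "M \<subseteq> carrier L"
    using assms(1) chain_subset_carrier unfolding maximal_chain_def by auto
  have m: "m \<in> carrier L" "m' \<in> carrier L" using assms(2,3) M(2) by auto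
  define z where "z = y \<curlyvee> m'"
  have z: "z \<in> carrier L" "m' \<sqsubseteq> z" "z \<sqsubseteq> m"
    unfolding z_def using join_closed join_upper2 join_le_iff assms(4,6,7) m by auto
  have "x \<sqsubseteq> m' \<or> m \<sqsubseteq> x" if "x \<in> M" for x
    using cover that chain_comparable[OF M(1) that assms(2)] refl[OF m(1)] by blast
  then have "z \<in> M" using maximal_chain_between[OF assms(1) assms(3,2)] z by blast
  then have "z = m \<or> z \<sqsubseteq> m'" using cover z(3) by blast
  then show ?thesis using antisym[OF z(1) m(2) _ z(2)] unfolding z_def by blast
qed

lemma chain_lower_neighbour:
  assumes "is_chain L M" "m \<in> M" "\<exists>x\<in>M. x \<sqsubseteq> m \<and> x \<noteq> m"
  obtains m' where "m' \<in> M" "m' \<sqsubseteq> m" "\<forall>x\<in>M. x \<sqsubseteq> m \<longrightarrow> x = m \<or> x \<sqsubseteq> m'"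
    and "card {x\<in>M. x \<sqsubseteq> m} = card {x\<in>M. x \<sqsubseteq> m'} + 1"
proof -
  define B where "B = {x\<in>M. x \<sqsubseteq> m \<and> x \<noteq> m}"
  have "is_chain L B" "B \<noteq> {}"
    using is_chain_subset[OF assms(1), of B] assms(3) unfolding B_def by auto
  then obtain m' where m': "m' \<in> B" "\<forall>x\<in>B. x \<sqsubseteq> m'" using chain_has_greatest by blast
  have M: "M \<subseteq> carrier L" "finite M" using assms(1) chain_subset_carrier chain_finite by auto
  have m: "m \<in> carrier L" "m' \<in> carrier L" "m' \<in> M" "m' \<sqsubseteq> m" "m' \<noteq> m"
    using m' assms(2) M(1) unfolding B_def by auto
  have cover: "\<forall>x\<in>M. x \<sqsubseteq> m \<longrightarrow> x = m \<or> x \<sqsubseteq> m'" using m'(2) unfolding B_def by blast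
  have "x \<sqsubseteq> m' \<longleftrightarrow> x \<sqsubseteq> m \<and> x \<noteq> m" if x: "x \<in> M" for x
  proof
    assume xm': "x \<sqsubseteq> m'"
    have "x \<in> carrier L" using x M(1) by blast
    then show "x \<sqsubseteq> m \<and> x \<noteq> m"
      using trans[OF _ m(2,1) xm' m(4)] antisym[OF m(2,1) m(4)] m(5) xm' by blast
  qed (use cover x in blast)
  then have "{x\<in>M. x \<sqsubseteq> m'} = {x\<in>M. x \<sqsubseteq> m} - {m}" by blast
  then have "card {x\<in>M. x \<sqsubseteq> m} = card {x\<in>M. x \<sqsubseteq> m'} + 1"
    using card.remove[of "{x\<in>M. x \<sqsubseteq> m}" m] assms(2) refl[OF m(1)] M(2) by simp
  with m(3,4) cover show ?thesis by (rule that)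
qed

lemma maximal_chain_least_is_bottom:
  assumes "maximal_chain L M" "m \<in> M" "\<forall>x\<in>M. x \<sqsubseteq> m \<longrightarrow> x = m"
  shows "\<forall>x\<in>carrier L. m \<sqsubseteq> x"
proof -
  obtain t where t: "t \<in> carrier L" "\<forall>x\<in>carrier L. t \<sqsubseteq> x" using has_bottom by blast
  have "m \<in> carrier L" using assms(1,2) chain_subset_carrier unfolding maximal_chain_def by blast
  then have "t = m" using maximal_chain_least[OF assms(1) t] assms(3) t(2) by blast
  with t show ?thesis by simp
qed

lemma card_chain_below_le:
  assumes M: "maximal_chain L M" "\<forall>x\<in>M. left_modular_elem L x"
  shows "m \<in> M \<Longrightarrow> is_chain L Y \<Longrightarrow> \<forall>y\<in>Y. y \<sqsubseteq> m \<Longrightarrow> card Y \<le> card {x\<in>M. x \<sqsubseteq> m}"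
proof (induction "card {x\<in>M. x \<sqsubseteq> m}" arbitrary: m Y rule: less_induct)
  case less
  have cM: "is_chain L M" "M \<subseteq> carrier L" "finite M"
    using M(1) chain_subset_carrier chain_finite unfolding maximal_chain_def by auto
  have m: "m \<in> carrier L" "m \<in> {x\<in>M. x \<sqsubseteq> m}" using less.prems(1) cM(2) refl by auto
  have Y: "Y \<subseteq> carrier L" "finite Y" using less.prems(2) chain_subset_carrier chain_finite by auto
  consider "Y = {}" | "\<not> (\<exists>x\<in>M. x \<sqsubseteq> m \<and> x \<noteq> m)" | "Y \<noteq> {}" "\<exists>x\<in>M. x \<sqsubseteq> m \<and> x \<noteq> m"
    by blast
  then show ?case
  proof cases
    case 2
    have "\<forall>x\<in>carrier L. m \<sqsubseteq> x"
      using maximal_chain_least_is_bottom[OF M(1) less.prems(1)] 2 by blast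
    then have "Y \<subseteq> {m}" using antisym less.prems(3) Y(1) m(1) by blast
    then have "card Y \<le> 1" using card_mono[of "{m}"] by simp
    also have "1 \<le> card {x\<in>M. x \<sqsubseteq> m}"
      using m(2) cM(3) by (auto simp: Suc_le_eq card_gt_0_iff)
    finally show ?thesis .
  next
    case 3
    obtain m' where m': "m' \<in> M" "m' \<sqsubseteq> m" and cover: "\<forall>x\<in>M. x \<sqsubseteq> m \<longrightarrow> x = m \<or> x \<sqsubseteq> m'"
      and card_below: "card {x\<in>M. x \<sqsubseteq> m} = card {x\<in>M. x \<sqsubseteq> m'} + 1"
      using chain_lower_neighbour[OF cM(1) less.prems(1) 3(2)] by blast
    have m'C: "m' \<in> carrier L" using m'(1) cM(2) by blast
    let ?f = "\<lambda>y. y \<curlywedge> m'" and ?g = "\<lambda>y. y \<curlyvee> m'"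
    have fg: "?f ` Y \<subseteq> carrier L" "?g ` Y \<subseteq> carrier L"
      using Y(1) m'C meet_closed join_closed by auto
    have mono: "?f u \<sqsubseteq> ?f v \<and> ?g u \<sqsubseteq> ?g v" if "u \<in> Y" "v \<in> Y" "u \<sqsubseteq> v" for u v
      using that Y(1) m'C meet_mono_left[of u v m'] join_mono_left[of u v m'] by blast
    have sep: "u = v" if "u \<in> Y" "v \<in> Y" "u \<sqsubseteq> v" "?f u = ?f v" "?g u = ?g v" for u v
      using left_modular_elem_separates[of m' u v] that Y(1) M(2) m'(1) by auto
    have "?g ` Y \<subseteq> {m', m}"
      using join_lower_cover_cases[OF M(1) less.prems(1) m' cover] Y(1) less.prems(3) by blast
    then have "card (?g ` Y) \<le> card {m', m}" by (intro card_mono) simp_all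
    also have "\<dots> \<le> 2" by (cases "m' = m") auto
    finally have "card (?g ` Y) \<le> 2" .
    moreover have "card (?f ` Y) \<le> card {x\<in>M. x \<sqsubseteq> m'}"
    proof (rule less.hyps)
      show "is_chain L (?f ` Y)" using is_chain_image[OF less.prems(2) fg(1)] mono by blast
      show "\<forall>y\<in>?f ` Y. y \<sqsubseteq> m'" using Y(1) m'C meet_lower2 by blast
    qed (use card_below m'(1) in auto)
    moreover have "card Y + 1 \<le> card (?f ` Y) + card (?g ` Y)"
      using card_chain_le_card_images[OF less.prems(2) 3(1) fg mono sep] .
    ultimately show ?thesis using card_below by linarith
  qed simp
qed

theorem left_modular_maximal_chain_is_maximum:
  assumes "maximal_chain L M" "\<forall>x\<in>M. left_modular_elem L x"
  shows "maximum_chain L M"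
  unfolding maximum_chain_def
proof (intro conjI allI impI)
  show M: "is_chain L M" using assms(1) unfolding maximal_chain_def by blast
  obtain t where t: "t \<in> carrier L" "\<forall>x\<in>carrier L. x \<sqsubseteq> t" using has_top by blast
  have "{x\<in>M. x \<sqsubseteq> t} = M" using t(2) chain_subset_carrier[OF M] by blast
  moreover have "t \<in> M" using maximal_chain_greatest[OF assms(1) t] .
  ultimately show "card T \<le> card M" if "is_chain L T" for T
    using card_chain_below_le[OF assms, of t T] that t(2) chain_subset_carrier[OF that] by auto
qed

end

section \<open>Doubling an interval\<close>

lemma leq_double: "leq (double P C) x y \<longleftrightarrow> leq P (butlast x) (butlast y) \<and> (last x \<longrightarrow> last y)"
  unfolding double_def by (simp add: leq_def)

lemma carrier_double: "carrier (double P C) =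
    (\<lambda>x. x @ [False]) ` down_of P C \<union> (\<lambda>x. x @ [True]) ` ((carrier P - down_of P C) \<union> C)"
  unfolding double_def by (simp add: carrier_def)

lemma snoc_in_butlast_image: "x @ [i] \<in> S \<Longrightarrow> x \<in> butlast ` S"
  by (metis butlast_snoc image_eqI)

lemma inj_on_butlast_snoc:
  assumes "\<forall>z\<in>S. \<exists>x i. z = x @ [i :: bool]" "\<nexists>x. x @ [False] \<in> S \<and> x @ [True] \<in> S"
  shows "inj_on butlast S"
proof
  fix u v assume uv: "u \<in> S" "v \<in> S" "butlast u = butlast v"
  obtain x i y j where u: "u = x @ [i]" and v: "v = y @ [j]" using assms(1) uv(1,2) by blast
  have "x = y" using uv(3) unfolding u v by simp
  then show "u = v" using assms(2) uv(1,2) unfolding u v by (cases i; cases j) auto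
qed

locale interval_doubling = finite_lattice L for L :: "bool list poset" +
  fixes a b :: "bool list"
  assumes a_carrier: "a \<in> carrier L" and b_carrier: "b \<in> carrier L" and a_le_b: "a \<sqsubseteq> b"
begin

definition C :: "bool list set" where "C = {z \<in> carrier L. a \<sqsubseteq> z \<and> z \<sqsubseteq> b}"

definition L' :: "bool list poset" where "L' = double L C"

text \<open>The pair \<open>(x, 0)\<close> lies in \<open>L[C]\<close> iff \<open>x \<in> I(C)\<close>, i.e. \<open>x \<sqsubseteq> b\<close>; the pair \<open>(x, 1)\<close>
  lies in \<open>L[C]\<close> iff \<open>x \<notin> I(C)\<close> or \<open>x \<in> C\<close>, i.e. iff \<open>upper x\<close>.\<close>
definition upper :: "bool list \<Rightarrow> bool" where "upper x \<longleftrightarrow> (x \<sqsubseteq> b \<longrightarrow> a \<sqsubseteq> x)"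

definition in_doubling :: "bool list \<Rightarrow> bool \<Rightarrow> bool" where
  "in_doubling x i \<longleftrightarrow> x \<in> carrier L \<and> (if i then upper x else x \<sqsubseteq> b)"

lemma down_of_C: "down_of L C = {y \<in> carrier L. y \<sqsubseteq> b}"
  unfolding down_of_def C_def using a_le_b b_carrier refl trans by blast

lemma snoc_in_L': "x @ [i] \<in> carrier L' \<longleftrightarrow> in_doubling x i"
proof -
  have "x @ [i] \<in> carrier L' \<longleftrightarrow>
      (\<not> i \<and> x \<in> carrier L \<and> x \<sqsubseteq> b) \<or> (i \<and> x \<in> (carrier L - {y \<in> carrier L. y \<sqsubseteq> b}) \<union> C)"
    unfolding L'_def carrier_double down_of_C by auto
  then show ?thesis unfolding in_doubling_def upper_def C_def by auto
qed

lemma L'_carrierE: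
  assumes "z \<in> carrier L'"
  obtains x i where "z = x @ [i]" "in_doubling x i"
  using assms snoc_in_L' unfolding L'_def carrier_double by blast

lemma leq_L': "leq L' (x @ [i]) (y @ [j]) \<longleftrightarrow> x \<sqsubseteq> y \<and> (i \<longrightarrow> j)"
  unfolding L'_def leq_double by simp

lemma ball_L': "(\<forall>z\<in>carrier L'. Q z) \<longleftrightarrow> (\<forall>x i. in_doubling x i \<longrightarrow> Q (x @ [i]))"
  by (metis L'_carrierE snoc_in_L')

lemma in_doubling_carrier: "in_doubling x i \<Longrightarrow> x \<in> carrier L"
  unfolding in_doubling_def by blast

lemma in_doubling_if: "x \<in> carrier L \<Longrightarrow> (if i then a \<sqsubseteq> x else x \<sqsubseteq> b) \<Longrightarrow> in_doubling x i"
  unfolding in_doubling_def upper_def by (cases i) auto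

lemma upper_mono: "upper x \<Longrightarrow> x \<in> carrier L \<Longrightarrow> y \<in> carrier L \<Longrightarrow> x \<sqsubseteq> y \<Longrightarrow> upper y"
  unfolding upper_def using a_carrier b_carrier trans by blast

lemma in_doubling_join:
  assumes "in_doubling x i" "in_doubling y j"
  shows "in_doubling (x \<curlyvee> y) (i \<or> j)"
proof -
  have xy: "x \<in> carrier L" "y \<in> carrier L" "x \<curlyvee> y \<in> carrier L"
    using assms in_doubling_carrier join_closed by auto
  have "upper (x \<curlyvee> y)" if "i \<or> j"
    using that assms upper_mono[OF _ xy(1,3) join_upper1[OF xy(1,2)]]
      upper_mono[OF _ xy(2,3) join_upper2[OF xy(1,2)]] unfolding in_doubling_def by auto
  moreover have "x \<curlyvee> y \<sqsubseteq> b" if "\<not> (i \<or> j)"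
    using that assms join_le_iff[OF xy(1,2) b_carrier] unfolding in_doubling_def by auto
  ultimately show ?thesis using xy(3) unfolding in_doubling_def by auto
qed

lemma in_doubling_meet:
  assumes "in_doubling x i" "in_doubling y j"
  shows "in_doubling (x \<curlywedge> y) (i \<and> j \<and> upper (x \<curlywedge> y))"
proof -
  have xy: "x \<in> carrier L" "y \<in> carrier L" "x \<curlywedge> y \<in> carrier L"
    using assms in_doubling_carrier meet_closed by auto
  have "x \<curlywedge> y \<sqsubseteq> b" if "\<not> (i \<and> j \<and> upper (x \<curlywedge> y))"
    using that assms trans[OF xy(3,1) b_carrier meet_lower1[OF xy(1,2)]]
      trans[OF xy(3,2) b_carrier meet_lower2[OF xy(1,2)]]
    unfolding in_doubling_def upper_def by auto
  then show ?thesis using xy(3) unfolding in_doubling_def by auto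
qed

lemma antisym_L':
  assumes "u \<in> carrier L'" "v \<in> carrier L'" "leq L' u v" "leq L' v u"
  shows "u = v"
  using assms antisym by (elim L'_carrierE) (auto simp: leq_L' dest: in_doubling_carrier)

lemma join_L'_props:
  assumes "in_doubling x i" "in_doubling y j"
  shows "(x \<curlyvee> y) @ [i \<or> j] \<in> carrier L'"
    and "leq L' (x @ [i]) ((x \<curlyvee> y) @ [i \<or> j])" "leq L' (y @ [j]) ((x \<curlyvee> y) @ [i \<or> j])"
    and "\<forall>w\<in>carrier L'. leq L' (x @ [i]) w \<and> leq L' (y @ [j]) w \<longrightarrow> leq L' ((x \<curlyvee> y) @ [i \<or> j]) w"
proof -
  have xy: "x \<in> carrier L" "y \<in> carrier L" using assms in_doubling_carrier by auto
  show "(x \<curlyvee> y) @ [i \<or> j] \<in> carrier L'" using in_doubling_join[OF assms] snoc_in_L' by blast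
  show "leq L' (x @ [i]) ((x \<curlyvee> y) @ [i \<or> j])" "leq L' (y @ [j]) ((x \<curlyvee> y) @ [i \<or> j])"
    using join_upper1[OF xy] join_upper2[OF xy] by (auto simp: leq_L')
  show "\<forall>w\<in>carrier L'. leq L' (x @ [i]) w \<and> leq L' (y @ [j]) w \<longrightarrow> leq L' ((x \<curlyvee> y) @ [i \<or> j]) w"
    unfolding ball_L' leq_L' using join_le_iff[OF xy] in_doubling_carrier by blast
qed

lemma meet_L'_props:
  assumes "in_doubling x i" "in_doubling y j"
  defines "k \<equiv> i \<and> j \<and> upper (x \<curlywedge> y)"
  shows "(x \<curlywedge> y) @ [k] \<in> carrier L'"
    and "leq L' ((x \<curlywedge> y) @ [k]) (x @ [i])" "leq L' ((x \<curlywedge> y) @ [k]) (y @ [j])"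
    and "\<forall>w\<in>carrier L'. leq L' w (x @ [i]) \<and> leq L' w (y @ [j]) \<longrightarrow> leq L' w ((x \<curlywedge> y) @ [k])"
proof -
  have xy: "x \<in> carrier L" "y \<in> carrier L" "x \<curlywedge> y \<in> carrier L"
    using assms in_doubling_carrier meet_closed by auto
  show "(x \<curlywedge> y) @ [k] \<in> carrier L'" using in_doubling_meet[OF assms(1,2)] snoc_in_L' k_def by blast
  show "leq L' ((x \<curlywedge> y) @ [k]) (x @ [i])" "leq L' ((x \<curlywedge> y) @ [k]) (y @ [j])"
    using meet_lower1[OF xy(1,2)] meet_lower2[OF xy(1,2)] by (auto simp: leq_L' k_def)
  show "\<forall>w\<in>carrier L'. leq L' w (x @ [i]) \<and> leq L' w (y @ [j]) \<longrightarrow> leq L' w ((x \<curlywedge> y) @ [k])"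
    unfolding ball_L' leq_L'
  proof (intro allI impI)
    fix u l assume u: "in_doubling u l" "(u \<sqsubseteq> x \<and> (l \<longrightarrow> i)) \<and> u \<sqsubseteq> y \<and> (l \<longrightarrow> j)"
    have ux: "u \<sqsubseteq> x \<curlywedge> y" using u le_meet_iff[OF xy(1,2)] in_doubling_carrier by blast
    moreover have "upper (x \<curlywedge> y)" if l
      using that u upper_mono[OF _ _ xy(3) ux] unfolding in_doubling_def by auto
    ultimately show "u \<sqsubseteq> x \<curlywedge> y \<and> (l \<longrightarrow> k)" using u unfolding k_def by blast
  qed
qed

lemma join_L':
  "in_doubling x i \<Longrightarrow> in_doubling y j \<Longrightarrow> pjoin L' (x @ [i]) (y @ [j]) = (x \<curlyvee> y) @ [i \<or> j]"
  by (rule pjoin_eqI[OF antisym_L' join_L'_props])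

lemma meet_L':
  "in_doubling x i \<Longrightarrow> in_doubling y j \<Longrightarrow>
    pmeet L' (x @ [i]) (y @ [j]) = (x \<curlywedge> y) @ [i \<and> j \<and> upper (x \<curlywedge> y)]"
  by (rule pmeet_eqI[OF antisym_L' meet_L'_props])

lemma finite_lattice_L': "finite_lattice L'"
proof
  have "carrier L' \<subseteq> (\<lambda>(x, i). x @ [i]) ` (carrier L \<times> UNIV)"
  proof
    fix z assume "z \<in> carrier L'"
    then obtain x i where "z = x @ [i]" "in_doubling x i" by (rule L'_carrierE)
    then show "z \<in> (\<lambda>(x, i). x @ [i]) ` (carrier L \<times> UNIV)"
      by (intro image_eqI[where x = "(x, i)"]) (simp_all add: in_doubling_carrier)
  qed
  moreover have "finite ((\<lambda>(x, i). x @ [i]) ` (carrier L \<times> (UNIV :: bool set)))"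
    using finite_carrier by simp
  ultimately show "finite (carrier L')" by (rule finite_subset)
  have "a @ [False] \<in> carrier L'"
    using a_carrier a_le_b by (simp add: snoc_in_L' in_doubling_def)
  then show "carrier L' \<noteq> {}" by blast
next
  fix u v w
  assume "u \<in> carrier L'" "v \<in> carrier L'" "w \<in> carrier L'"
  then obtain x i y j z k where u: "u = x @ [i]" "in_doubling x i"
    and v: "v = y @ [j]" "in_doubling y j" and w: "w = z @ [k]" "in_doubling z k"
    by (elim L'_carrierE) blast
  have xyz: "x \<in> carrier L" "y \<in> carrier L" "z \<in> carrier L"
    using u v w in_doubling_carrier by auto
  show "leq L' u u" using refl[OF xyz(1)] by (simp add: u leq_L')
  show "leq L' u v \<Longrightarrow> leq L' v u \<Longrightarrow> u = v"
    using antisym_L' snoc_in_L' u v by blast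
  show "leq L' u v \<Longrightarrow> leq L' v w \<Longrightarrow> leq L' u w"
    using trans[OF xyz] by (auto simp: u v w leq_L')
  show "\<exists>z\<in>carrier L'. leq L' u z \<and> leq L' v z \<and>
      (\<forall>w\<in>carrier L'. leq L' u w \<and> leq L' v w \<longrightarrow> leq L' z w)"
    using join_L'_props[OF u(2) v(2)] unfolding u v by blast
  show "\<exists>z\<in>carrier L'. leq L' z u \<and> leq L' z v \<and>
      (\<forall>w\<in>carrier L'. leq L' w u \<and> leq L' w v \<longrightarrow> leq L' w z)"
    using meet_L'_props[OF u(2) v(2)] unfolding u v by blast
qed

sublocale L': finite_lattice L' by (rule finite_lattice_L')

lemma modular_law_L'_iff:
  assumes "in_doubling m k" "in_doubling p i" "in_doubling q j"
  shows "pmeet L' (pjoin L' (p @ [i]) (m @ [k])) (q @ [j]) =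
      pjoin L' (p @ [i]) (pmeet L' (m @ [k]) (q @ [j])) \<longleftrightarrow> (p \<curlyvee> m) \<curlywedge> q = p \<curlyvee> (m \<curlywedge> q) \<and>
      ((i \<or> k) \<and> j \<and> upper ((p \<curlyvee> m) \<curlywedge> q) \<longleftrightarrow> i \<or> (k \<and> j \<and> upper (m \<curlywedge> q)))"
  using assms by (simp add: join_L' meet_L' in_doubling_join in_doubling_meet)

lemma modular_law_levels:
  assumes p: "in_doubling p i" and q: "in_doubling q j" and "p \<sqsubseteq> q" "i \<longrightarrow> j"
    and m: "m \<in> carrier L" "if k then a \<sqsubseteq> m else m \<sqsubseteq> b"
  shows "(i \<or> k) \<and> j \<and> upper (p \<curlyvee> (m \<curlywedge> q)) \<longleftrightarrow> i \<or> (k \<and> j \<and> upper (m \<curlywedge> q))"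
proof -
  define w where "w = m \<curlywedge> q"
  define z where "z = p \<curlyvee> w"
  have pq: "p \<in> carrier L" "q \<in> carrier L" using p q in_doubling_carrier by auto
  have w: "w \<in> carrier L" "w \<sqsubseteq> q" using meet_closed meet_lower2 m(1) pq(2) unfolding w_def by auto
  have z: "z \<in> carrier L" "p \<sqsubseteq> z" "w \<sqsubseteq> z" "z \<sqsubseteq> q"
    using join_closed join_upper1 join_upper2 join_le_iff w pq assms(3) unfolding z_def by auto
  have upper_z: "upper z" if i
    using that p upper_mono[OF _ pq(1) z(1,2)] unfolding in_doubling_def by auto
  show ?thesis
  proof (cases k)
    case False
    then show ?thesis using upper_z assms(4) unfolding z_def w_def by auto
  next
    case True
    have "upper w" if "\<not> i" "upper z"
      unfolding upper_def
    proof
      assume "w \<sqsubseteq> b"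
      moreover have "p \<sqsubseteq> b" using p \<open>\<not> i\<close> unfolding in_doubling_def by auto
      ultimately have "a \<sqsubseteq> z"
        using \<open>upper z\<close> join_le_iff[OF pq(1) w(1) b_carrier] unfolding upper_def z_def by auto
      then have "a \<sqsubseteq> q" using trans[OF a_carrier z(1) pq(2) _ z(4)] by blast
      then show "a \<sqsubseteq> w" using True m le_meet_iff[OF m(1) pq(2) a_carrier] unfolding w_def by auto
    qed
    moreover have "upper z" if "upper w" using that upper_mono w(1) z(1,3) by blast
    ultimately show ?thesis using True upper_z assms(4) unfolding z_def w_def by auto
  qed
qed

lemma left_modular_elem_lift:
  assumes lm: "left_modular_elem L m" and k: "if k then a \<sqsubseteq> m else m \<sqsubseteq> b"
  shows "left_modular_elem L' (m @ [k])"
proof -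
  have m: "m \<in> carrier L" using lm unfolding left_modular_elem_def by blast
  have mk: "in_doubling m k" using in_doubling_if[OF m k] .
  show ?thesis
    unfolding left_modular_elem_def ball_L'
  proof (intro conjI allI impI)
    show "m @ [k] \<in> carrier L'" using mk snoc_in_L' by blast
    fix p i q j
    assume p: "in_doubling p i" and q: "in_doubling q j"
      and "leq L' (p @ [i]) (q @ [j]) \<and> p @ [i] \<noteq> q @ [j]"
    then have pq: "p \<sqsubseteq> q" "i \<longrightarrow> j" by (auto simp: leq_L')
    have "(p \<curlyvee> m) \<curlywedge> q = p \<curlyvee> (m \<curlywedge> q)"
      using left_modular_elemD[OF lm _ _ pq(1)] p q in_doubling_carrier by blast
    then show "pmeet L' (pjoin L' (p @ [i]) (m @ [k])) (q @ [j]) =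
        pjoin L' (p @ [i]) (pmeet L' (m @ [k]) (q @ [j]))"
      using modular_law_L'_iff[OF mk p q] modular_law_levels[OF p q pq m k] by simp
  qed
qed

text \<open>To test the modular law at \<open>p \<sqsubseteq> q\<close> in \<open>L\<close>, lift \<open>p\<close> to the lowest and \<open>q\<close> to the
  highest level available to it.\<close>
lemma left_modular_elem_project:
  assumes mk: "in_doubling m k" and lm: "left_modular_elem L' (m @ [k])"
  shows "left_modular_elem L m"
  unfolding left_modular_elem_def
proof (intro conjI ballI impI)
  show "m \<in> carrier L" using mk by (rule in_doubling_carrier)
  fix p q assume p: "p \<in> carrier L" and q: "q \<in> carrier L" and pq: "p \<sqsubseteq> q \<and> p \<noteq> q"
  define i where "i = (\<not> p \<sqsubseteq> b)"
  define j where "j = upper q"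
  have i: "in_doubling p i" using p unfolding in_doubling_def upper_def i_def by auto
  have j: "in_doubling q j" using q unfolding in_doubling_def upper_def j_def by auto
  have "i \<longrightarrow> j" using trans[OF p q b_carrier] pq unfolding i_def j_def upper_def by blast
  then have "leq L' (p @ [i]) (q @ [j]) \<and> p @ [i] \<noteq> q @ [j]" using pq by (simp add: leq_L')
  then have "pmeet L' (pjoin L' (p @ [i]) (m @ [k])) (q @ [j]) =
      pjoin L' (p @ [i]) (pmeet L' (m @ [k]) (q @ [j]))"
    using lm i j snoc_in_L' unfolding left_modular_elem_def by blast
  then show "(p \<curlyvee> m) \<curlywedge> q = p \<curlyvee> (m \<curlywedge> q)" using modular_law_L'_iff[OF mk i j] by blast
qed

lemma a_le_if_left_modular_upper:
  assumes y: "in_doubling y True" and lm: "left_modular_elem L' (y @ [True])"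
  shows "a \<sqsubseteq> y"
proof -
  have yC: "y \<in> carrier L" using y by (rule in_doubling_carrier)
  have a0: "in_doubling a False" and a1: "in_doubling a True"
    using a_carrier a_le_b refl[OF a_carrier] unfolding in_doubling_def upper_def by auto
  have "leq L' (a @ [False]) (a @ [True]) \<and> a @ [False] \<noteq> a @ [True]"
    using refl[OF a_carrier] by (simp add: leq_L')
  then have "pmeet L' (pjoin L' (a @ [False]) (y @ [True])) (a @ [True]) =
      pjoin L' (a @ [False]) (pmeet L' (y @ [True]) (a @ [True]))"
    using lm a0 a1 snoc_in_L' unfolding left_modular_elem_def by blast
  moreover have "(a \<curlyvee> y) \<curlywedge> a = a"
    using meet_commute meet_absorb1 join_closed join_upper1 yC a_carrier by metis
  ultimately have "upper (y \<curlywedge> a)"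
    using modular_law_L'_iff[OF y a0 a1] refl[OF a_carrier] unfolding upper_def by auto
  moreover have "y \<curlywedge> a \<sqsubseteq> b"
    using trans[OF meet_closed[OF yC a_carrier] a_carrier b_carrier
        meet_lower2[OF yC a_carrier] a_le_b] .
  ultimately show ?thesis
    using le_meet_iff[OF yC a_carrier a_carrier] unfolding upper_def by blast
qed

lemma carrier_L'_snocs: "S \<subseteq> carrier L' \<Longrightarrow> \<forall>z\<in>S. \<exists>x i. z = x @ [i]"
  by (metis L'_carrierE subsetD)

lemma is_chain_butlast:
  assumes "is_chain L' S"
  shows "is_chain L (butlast ` S)"
  unfolding is_chain_def
proof (intro conjI ballI)
  have S: "S \<subseteq> carrier L'" using assms by (rule L'.chain_subset_carrier)
  show "butlast ` S \<subseteq> carrier L"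
  proof
    fix x assume "x \<in> butlast ` S"
    then obtain i where "x @ [i] \<in> carrier L'"
      using S carrier_L'_snocs[OF S] by (metis butlast_snoc image_iff subsetD)
    then show "x \<in> carrier L" using snoc_in_L' in_doubling_carrier by blast
  qed
  fix x y assume "x \<in> butlast ` S" "y \<in> butlast ` S"
  then obtain i j where "x @ [i] \<in> S" "y @ [j] \<in> S"
    using carrier_L'_snocs[OF S] by (metis butlast_snoc image_iff)
  from L'.chain_comparable[OF assms this] show "x \<sqsubseteq> y \<or> y \<sqsubseteq> x" by (auto simp: leq_L')
qed

lemma both_levels_imp_C: "x @ [False] \<in> carrier L' \<Longrightarrow> x @ [True] \<in> carrier L' \<Longrightarrow> x \<in> C"
  unfolding snoc_in_L' in_doubling_def upper_def C_def by auto

lemma chain_L'_pair_unique: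
  assumes "is_chain L' S" "x @ [False] \<in> S" "x @ [True] \<in> S" "y @ [False] \<in> S" "y @ [True] \<in> S"
  shows "x = y"
proof -
  have "y \<sqsubseteq> x"
    using L'.chain_comparable[OF assms(1) assms(3,4)] by (simp add: leq_L')
  moreover have "x \<sqsubseteq> y"
    using L'.chain_comparable[OF assms(1) assms(5,2)] by (simp add: leq_L')
  moreover have "x @ [False] \<in> carrier L'" "y @ [False] \<in> carrier L'"
    using assms(1,2,4) L'.chain_subset_carrier by auto
  then have "x \<in> carrier L" "y \<in> carrier L" using snoc_in_L' in_doubling_carrier by auto
  ultimately show ?thesis using antisym by blast
qed

lemma card_chain_L'_eq_butlast:
  assumes "is_chain L' S" "\<nexists>x. x @ [False] \<in> S \<and> x @ [True] \<in> S"
  shows "card S = card (butlast ` S)"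
  using inj_on_butlast_snoc[OF carrier_L'_snocs[OF L'.chain_subset_carrier[OF assms(1)]] assms(2)]
  by (simp add: card_image)

lemma card_chain_L'_le_butlast:
  assumes S: "is_chain L' S"
  shows "card S \<le> card (butlast ` S) + 1"
proof (cases "\<exists>x. x @ [False] \<in> S \<and> x @ [True] \<in> S")
  case False
  then show ?thesis using card_chain_L'_eq_butlast[OF S] by simp
next
  case True
  then obtain x where x: "x @ [False] \<in> S" "x @ [True] \<in> S" by blast
  define S0 where "S0 = S - {x @ [True]}"
  have "is_chain L' S0" using is_chain_subset[OF S, of S0] unfolding S0_def by blast
  moreover have "\<nexists>y. y @ [False] \<in> S0 \<and> y @ [True] \<in> S0"
  proof
    assume "\<exists>y. y @ [False] \<in> S0 \<and> y @ [True] \<in> S0"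
    then obtain y where "y @ [False] \<in> S" "y @ [True] \<in> S" "y @ [True] \<noteq> x @ [True]"
      unfolding S0_def by blast
    then show False using chain_L'_pair_unique[OF S x] by blast
  qed
  ultimately have "card S0 = card (butlast ` S0)" by (rule card_chain_L'_eq_butlast)
  also have "\<dots> \<le> card (butlast ` S)"
    by (rule card_mono) (use L'.chain_finite[OF S] in \<open>auto simp: S0_def\<close>)
  finally show ?thesis
    using card.remove[OF L'.chain_finite[OF S] x(2)] unfolding S0_def by simp
qed

lemma chain_L'_level:
  assumes "is_chain L' S" "x @ [False] \<in> S" "x @ [True] \<in> S" "m @ [k] \<in> S"
  shows "if k then a \<sqsubseteq> m else m \<sqsubseteq> b"
proof -
  have S: "S \<subseteq> carrier L'" using assms(1) by (rule L'.chain_subset_carrier)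
  have x: "x \<in> C" using both_levels_imp_C assms(2,3) S by blast
  have m: "in_doubling m k" using assms(4) S snoc_in_L' by blast
  show ?thesis
  proof (cases k)
    case True
    then have "x \<sqsubseteq> m"
      using L'.chain_comparable[OF assms(1,2,4)] by (simp add: leq_L')
    moreover have "x \<in> carrier L" "a \<sqsubseteq> x" using x unfolding C_def by auto
    ultimately show ?thesis
      using True trans[OF a_carrier _ in_doubling_carrier[OF m]] by simp
  qed (use m in \<open>simp add: in_doubling_def\<close>)
qed

lemma lift_chain_through:
  assumes S: "is_chain L S" and w: "w \<in> S" "w \<in> C"
  defines "S' \<equiv> insert (w @ [True]) ((\<lambda>t. t @ [\<not> t \<sqsubseteq> w]) ` S)"
  shows "is_chain L' S'" and "card S' = card S + 1"
    and "\<forall>t\<in>S. left_modular_elem L t \<Longrightarrow> \<forall>z\<in>S'. left_modular_elem L' z"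
proof -
  let ?g = "\<lambda>t. t @ [\<not> t \<sqsubseteq> w]"
  have SC: "S \<subseteq> carrier L" using S by (rule chain_subset_carrier)
  have wC: "w \<in> carrier L" "a \<sqsubseteq> w" "w \<sqsubseteq> b" using w unfolding C_def by auto
  have level: "if \<not> t \<sqsubseteq> w then a \<sqsubseteq> t else t \<sqsubseteq> b" if "t \<in> S" for t
  proof -
    have "t \<in> carrier L" using that SC by blast
    then show ?thesis
      using chain_comparable[OF S that w(1)] trans[OF a_carrier wC(1)]
        trans[OF _ wC(1) b_carrier] wC
      by auto
  qed
  have mono: "leq L' (?g s) (?g t)" if "s \<in> S" "t \<in> S" "s \<sqsubseteq> t" for s t
    using that trans[of s t w] SC wC(1) by (auto simp: leq_L')
  have w_cmp: "leq L' (?g t) (w @ [True]) \<or> leq L' (w @ [True]) (?g t)" if "t \<in> S" for t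
    using chain_comparable[OF S that w(1)] by (auto simp: leq_L')
  show "is_chain L' S'"
    unfolding is_chain_def
  proof (intro conjI ballI)
    show "S' \<subseteq> carrier L'"
      using level wC SC in_doubling_if snoc_in_L' unfolding S'_def by auto
    have g_cmp: "leq L' (?g s) (?g t) \<or> leq L' (?g t) (?g s)" if "s \<in> S" "t \<in> S" for s t
      using mono that chain_comparable[OF S that] by blast
    have "leq L' (w @ [True]) (w @ [True])" using refl[OF wC(1)] by (simp add: leq_L')
    moreover fix u v assume "u \<in> S'" "v \<in> S'"
    ultimately show "leq L' u v \<or> leq L' v u"
      using g_cmp w_cmp unfolding S'_def by blast
  qed
  have "inj_on ?g S" by (rule inj_onI) simp
  moreover have "w @ [True] \<notin> ?g ` S" using refl[OF wC(1)] by auto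
  ultimately show "card S' = card S + 1"
    unfolding S'_def using chain_finite[OF S] by (simp add: card_image)
  assume "\<forall>t\<in>S. left_modular_elem L t"
  then show "\<forall>z\<in>S'. left_modular_elem L' z"
    using level left_modular_elem_lift wC(2) w(1) unfolding S'_def by auto
qed

section \<open>Left modularity of the doubling\<close>

text \<open>A maximal chain through \<open>(w, 0) < (w, 1)\<close> has level \<open>0\<close> below \<open>w\<close> and level \<open>1\<close>
  above \<open>w\<close>; so an element comparable to its projection can be inserted at the level on
  its side of \<open>w\<close>.\<close>
lemma maximal_chain_butlast_insert:
  assumes M': "maximal_chain L' M'" and w: "w @ [False] \<in> M'" "w @ [True] \<in> M'"
    and z: "z \<in> carrier L" and cmp: "\<forall>m\<in>butlast ` M'. m \<sqsubseteq> z \<or> z \<sqsubseteq> m"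
  shows "z \<in> butlast ` M'"
proof -
  have cM': "is_chain L' M'" using M' unfolding maximal_chain_def by blast
  have "w \<in> C" using both_levels_imp_C w L'.chain_subset_carrier[OF cM'] by blast
  then have wL: "w \<in> carrier L" "a \<sqsubseteq> w" "w \<sqsubseteq> b" unfolding C_def by auto
  have below: "m \<sqsubseteq> w" if "m @ [False] \<in> M'" for m
    using L'.chain_comparable[OF cM' that w(2)] by (simp add: leq_L')
  have above: "w \<sqsubseteq> m" if "m @ [True] \<in> M'" for m
    using L'.chain_comparable[OF cM' that w(1)] by (simp add: leq_L')
  define k where "k = (\<not> z \<sqsubseteq> w)"
  have k: "if k then w \<sqsubseteq> z else z \<sqsubseteq> w"
    using cmp snoc_in_butlast_image[OF w(1)] unfolding k_def by auto
  have "z @ [k] \<in> M'"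
  proof (rule L'.maximal_chain_insert[OF M'])
    have "if k then a \<sqsubseteq> z else z \<sqsubseteq> b"
      using k trans[OF a_carrier wL(1) z wL(2)] trans[OF z wL(1) b_carrier _ wL(3)] by auto
    then show "z @ [k] \<in> carrier L'" using in_doubling_if[OF z] snoc_in_L' by blast
    show "\<forall>u\<in>M'. leq L' u (z @ [k]) \<or> leq L' (z @ [k]) u"
    proof
      fix u assume u: "u \<in> M'"
      then have "u \<in> carrier L'" using L'.chain_subset_carrier[OF cM'] by blast
      then obtain m l where ml: "u = m @ [l]" "in_doubling m l" by (rule L'_carrierE)
      have m: "m \<in> butlast ` M'" "m \<in> carrier L"
        using snoc_in_butlast_image u ml in_doubling_carrier by auto
      show "leq L' u (z @ [k]) \<or> leq L' (z @ [k]) u"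
      proof (cases l)
        case True
        then have "w \<sqsubseteq> m" using above[of m] u ml(1) by simp
        then show ?thesis using True k cmp m trans[OF z wL(1) m(2)] ml(1)
          by (cases k) (auto simp: leq_L')
      next
        case False
        then have "m \<sqsubseteq> w" using below[of m] u ml(1) by simp
        then show ?thesis using False k cmp m trans[OF m(2) wL(1) z] ml(1)
          by (cases k) (auto simp: leq_L')
      qed
    qed
  qed
  then show ?thesis by (rule snoc_in_butlast_image)
qed

lemma maximal_chain_butlast:
  assumes M': "maximal_chain L' M'" and w: "w @ [False] \<in> M'" "w @ [True] \<in> M'"
  shows "maximal_chain L (butlast ` M')"
  unfolding maximal_chain_def
proof (intro conjI allI impI)
  show "is_chain L (butlast ` M')"
    using M' is_chain_butlast unfolding maximal_chain_def by blast
  fix T assume T: "is_chain L T \<and> butlast ` M' \<subseteq> T"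
  have "z \<in> butlast ` M'" if "z \<in> T" for z
  proof (rule maximal_chain_butlast_insert[OF M' w])
    show "z \<in> carrier L" using that T chain_subset_carrier by blast
    show "\<forall>m\<in>butlast ` M'. m \<sqsubseteq> z \<or> z \<sqsubseteq> m" using that T chain_comparable by blast
  qed
  then show "T = butlast ` M'" using T by blast
qed

lemma least_L': "t \<in> carrier L \<Longrightarrow> \<forall>x\<in>carrier L. t \<sqsubseteq> x \<Longrightarrow> \<forall>z\<in>carrier L'. leq L' (t @ [False]) z"
  unfolding ball_L' leq_L' using in_doubling_carrier by blast

lemma greatest_L': "t \<in> carrier L \<Longrightarrow> \<forall>x\<in>carrier L. x \<sqsubseteq> t \<Longrightarrow> \<forall>z\<in>carrier L'. leq L' z (t @ [True])"
  unfolding ball_L' leq_L' using in_doubling_carrier by blast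

lemma maximal_chain_L'_level_switch:
  assumes M': "maximal_chain L' M'"
  obtains x y where "x @ [False] \<in> M'" "y @ [True] \<in> M'"
    and "\<forall>z\<in>M'. leq L' z (x @ [False]) \<or> leq L' (y @ [True]) z"
proof -
  have cM': "is_chain L' M'" and M'C: "M' \<subseteq> carrier L'"
    using M' L'.chain_subset_carrier unfolding maximal_chain_def by auto
  define M0 where "M0 = {x. x @ [False] \<in> M'}"
  define M1 where "M1 = {x. x @ [True] \<in> M'}"
  have "M0 \<subseteq> butlast ` M'" "M1 \<subseteq> butlast ` M'"
    unfolding M0_def M1_def using snoc_in_butlast_image by auto
  then have cM01: "is_chain L M0" "is_chain L M1"
    using is_chain_subset[OF is_chain_butlast[OF cM']] by auto
  obtain t0 where t0: "t0 \<in> carrier L" "\<forall>x\<in>carrier L. t0 \<sqsubseteq> x" using has_bottom by blast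
  obtain t1 where t1: "t1 \<in> carrier L" "\<forall>x\<in>carrier L. x \<sqsubseteq> t1" using has_top by blast
  have "t0 @ [False] \<in> carrier L'" using t0 b_carrier by (simp add: snoc_in_L' in_doubling_def)
  then have "t0 \<in> M0"
    using L'.maximal_chain_least[OF M' _ least_L'[OF t0]] unfolding M0_def by blast
  have "t1 @ [True] \<in> carrier L'"
    using t1 a_carrier by (simp add: snoc_in_L' in_doubling_def upper_def)
  then have "t1 \<in> M1"
    using L'.maximal_chain_greatest[OF M' _ greatest_L'[OF t1]] unfolding M1_def by blast
  obtain x where x: "x @ [False] \<in> M'" "\<forall>m\<in>M0. m \<sqsubseteq> x"
    using chain_has_greatest[OF cM01(1)] \<open>t0 \<in> M0\<close> unfolding M0_def by blast
  obtain y where y: "y @ [True] \<in> M'" "\<forall>m\<in>M1. y \<sqsubseteq> m"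
    using chain_has_least[OF cM01(2)] \<open>t1 \<in> M1\<close> unfolding M1_def by blast
  have "\<forall>z\<in>M'. leq L' z (x @ [False]) \<or> leq L' (y @ [True]) z"
  proof
    fix z assume "z \<in> M'"
    moreover from this have "z \<in> carrier L'" using M'C by blast
    then obtain m l where "z = m @ [l]" by (rule L'_carrierE)
    ultimately show "leq L' z (x @ [False]) \<or> leq L' (y @ [True]) z"
      using x(2) y(2) unfolding M0_def M1_def by (cases l) (auto simp: leq_L')
  qed
  with x(1) y(1) show ?thesis by (rule that)
qed

text \<open>Left modularity of the first element \<open>(y, 1)\<close> of level \<open>1\<close> forces \<open>a \<sqsubseteq> y\<close>, so both
  copies of \<open>x \<curlyvee> a \<in> C\<close> fit between the last element \<open>(x, 0)\<close> of level \<open>0\<close> and \<open>(y, 1)\<close>.\<close>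
lemma maximal_chain_L'_has_pair:
  assumes M': "maximal_chain L' M'" "\<forall>z\<in>M'. left_modular_elem L' z"
  obtains w where "w @ [False] \<in> M'" "w @ [True] \<in> M'"
proof -
  obtain x y where x: "x @ [False] \<in> M'" and y: "y @ [True] \<in> M'"
    and split: "\<forall>z\<in>M'. leq L' z (x @ [False]) \<or> leq L' (y @ [True]) z"
    using maximal_chain_L'_level_switch[OF M'(1)] .
  have cM': "is_chain L' M'" and M'C: "M' \<subseteq> carrier L'"
    using M'(1) L'.chain_subset_carrier unfolding maximal_chain_def by auto
  have x': "x \<in> carrier L" "x \<sqsubseteq> b" and y': "in_doubling y True"
    using x y M'C by (auto simp: snoc_in_L' in_doubling_def)
  have yL: "y \<in> carrier L" using y' by (rule in_doubling_carrier)
  have xy: "x \<sqsubseteq> y" using L'.chain_comparable[OF cM' x y] by (simp add: leq_L')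
  have ay: "a \<sqsubseteq> y" using a_le_if_left_modular_upper[OF y'] M'(2) y by blast
  define w where "w = x \<curlyvee> a"
  have w: "w \<in> carrier L" "x \<sqsubseteq> w" "a \<sqsubseteq> w" "w \<sqsubseteq> b" "w \<sqsubseteq> y"
    unfolding w_def using join_closed[OF x'(1) a_carrier] join_upper1[OF x'(1) a_carrier]
      join_upper2[OF x'(1) a_carrier] join_le_iff[OF x'(1) a_carrier] x' xy ay yL b_carrier a_le_b
    by auto
  have "w @ [False] \<in> M'"
    by (rule L'.maximal_chain_between[OF M'(1) x y split])
      (use w in \<open>simp_all add: snoc_in_L' leq_L' in_doubling_def\<close>)
  moreover have "w @ [True] \<in> M'"
    by (rule L'.maximal_chain_between[OF M'(1) x y split])
      (use w in \<open>simp_all add: snoc_in_L' leq_L' in_doubling_def upper_def\<close>)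
  ultimately show ?thesis by (rule that)
qed

lemma left_modular_L'_necessary:
  assumes "left_modular L'"
  shows "left_modular L" and "C \<inter> spine L \<noteq> {}"
proof -
  obtain M' where M': "maximal_chain L' M'" "\<forall>z\<in>M'. left_modular_elem L' z"
    using assms unfolding left_modular_def by blast
  obtain w where w: "w @ [False] \<in> M'" "w @ [True] \<in> M'"
    using maximal_chain_L'_has_pair[OF M'] .
  have M'C: "M' \<subseteq> carrier L'"
    using M'(1) L'.chain_subset_carrier unfolding maximal_chain_def by blast
  have B: "maximal_chain L (butlast ` M')" using maximal_chain_butlast[OF M'(1) w] .
  have lm: "\<forall>m\<in>butlast ` M'. left_modular_elem L m"
  proof
    fix m assume "m \<in> butlast ` M'"
    then obtain z where z: "z \<in> M'" "m = butlast z" by blast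
    then have "z \<in> carrier L'" using M'C by blast
    then obtain x k where "z = x @ [k]" "in_doubling x k" by (rule L'_carrierE)
    with z show "left_modular_elem L m" using left_modular_elem_project M'(2) by auto
  qed
  then show "left_modular L" using B unfolding left_modular_def by blast
  have "maximum_chain L (butlast ` M')" using left_modular_maximal_chain_is_maximum[OF B lm] .
  moreover have "w \<in> butlast ` M'" using w(1) by (rule snoc_in_butlast_image)
  ultimately have "w \<in> spine L" unfolding spine_iff by blast
  moreover have "w \<in> C" using both_levels_imp_C w M'C by blast
  ultimately show "C \<inter> spine L \<noteq> {}" by blast
qed

lemma card_chain_L'_le:
  assumes "maximum_chain L S" "is_chain L' T"
  shows "card T \<le> card S + 1"
proof -
  have "card (butlast ` T) \<le> card S"
    using assms is_chain_butlast unfolding maximum_chain_def by blast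
  then show ?thesis using card_chain_L'_le_butlast[OF assms(2)] by linarith
qed

lemma long_chain_L'_projects:
  assumes S: "maximum_chain L S" and T: "is_chain L' T" "card S + 1 \<le> card T"
  shows "maximum_chain L (butlast ` T)" and "\<exists>x. x @ [False] \<in> T \<and> x @ [True] \<in> T"
proof -
  have T': "is_chain L (butlast ` T)" using T(1) by (rule is_chain_butlast)
  then have "card (butlast ` T) \<le> card S" using S unfolding maximum_chain_def by blast
  moreover have "card R \<le> card S" if "is_chain L R" for R
    using S that unfolding maximum_chain_def by blast
  ultimately show "maximum_chain L (butlast ` T)"
    using T' card_chain_L'_le_butlast[OF T(1)] T(2) unfolding maximum_chain_def by fastforce
  show "\<exists>x. x @ [False] \<in> T \<and> x @ [True] \<in> T"
  proof (rule ccontr)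
    assume "\<not> ?thesis"
    then have "card T = card (butlast ` T)" by (rule card_chain_L'_eq_butlast[OF T(1)])
    then show False using T(2) \<open>card (butlast ` T) \<le> card S\<close> by linarith
  qed
qed

lemma left_modular_L'_sufficient:
  assumes spine_lm: "spine L \<subseteq> {m. left_modular_elem L m}" and w: "w \<in> C" "w \<in> spine L"
  shows "left_modular L'" and "spine L' \<subseteq> {z. left_modular_elem L' z}"
proof -
  obtain S where S: "maximum_chain L S" "w \<in> S" using w(2) unfolding spine_iff by blast
  have cS: "is_chain L S" using S(1) unfolding maximum_chain_def by blast
  have "S \<subseteq> spine L" using S(1) by (rule maximum_chain_subset_spine)
  then have lmS: "\<forall>t\<in>S. left_modular_elem L t" using spine_lm by blast
  define S' where "S' = insert (w @ [True]) ((\<lambda>t. t @ [\<not> t \<sqsubseteq> w]) ` S)"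
  have S': "is_chain L' S'" "card S' = card S + 1" "\<forall>z\<in>S'. left_modular_elem L' z"
    unfolding S'_def
    by (fact lift_chain_through[OF cS S(2) w(1)] lift_chain_through(3)[OF cS S(2) w(1) lmS])+
  then have "maximum_chain L' S'"
    using card_chain_L'_le[OF S(1)] unfolding maximum_chain_def by simp
  then show "left_modular L'"
    using L'.maximum_chain_imp_maximal S'(3) unfolding left_modular_def by blast
  show "spine L' \<subseteq> {z. left_modular_elem L' z}"
  proof
    fix z assume "z \<in> spine L'"
    then obtain T where T: "maximum_chain L' T" "z \<in> T" unfolding spine_iff by blast
    have cT: "is_chain L' T" using T(1) unfolding maximum_chain_def by blast
    have "card S + 1 \<le> card T" using T(1) S'(1,2) unfolding maximum_chain_def by metis
    note long = long_chain_L'_projects[OF S(1) cT this]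
    obtain x where x: "x @ [False] \<in> T" "x @ [True] \<in> T" using long(2) by blast
    have "butlast ` T \<subseteq> spine L" using long(1) by (rule maximum_chain_subset_spine)
    then have lm: "\<forall>m\<in>butlast ` T. left_modular_elem L m" using spine_lm by blast
    have "z \<in> carrier L'" using T(2) L'.chain_subset_carrier[OF cT] by blast
    then obtain m k where mk: "z = m @ [k]" by (rule L'_carrierE)
    then have "m \<in> butlast ` T" using T(2) snoc_in_butlast_image by simp
    then have "left_modular_elem L m" using lm by blast
    moreover have "if k then a \<sqsubseteq> m else m \<sqsubseteq> b" using chain_L'_level[OF cT x] T(2) mk by simp
    ultimately show "z \<in> {z. left_modular_elem L' z}" using left_modular_elem_lift mk by simp
  qed
qed

end

section \<open>Iterated doublings\<close>

lemma interval_doublingE: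
  assumes "finite_lattice L" "is_interval L C"
  obtains a b where "interval_doubling L a b" "C = interval_doubling.C L a b"
proof -
  obtain a b where ab: "a \<in> carrier L" "b \<in> carrier L" "leq L a b"
    and C: "C = {z \<in> carrier L. leq L a z \<and> leq L z b}"
    using assms(2) unfolding is_interval_def by blast
  have "interval_doubling L a b"
    using assms(1) ab by (intro interval_doubling.intro interval_doubling_axioms.intro)
  moreover from this have "C = interval_doubling.C L a b" by (simp add: C interval_doubling.C_def)
  ultimately show ?thesis by (rule that)
qed

lemma finite_lattice_double:
  assumes "finite_lattice L" "is_interval L C"
  shows "finite_lattice (double L C)"
proof -
  obtain a b where D: "interval_doubling L a b" and C: "C = interval_doubling.C L a b"
    using interval_doublingE[OF assms] .
  interpret D: interval_doubling L a b by (rule D)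
  show ?thesis using D.finite_lattice_L' unfolding D.L'_def C .
qed

lemma left_modular_double:
  assumes "finite_lattice L" "is_interval L C"
    and spine_lm: "left_modular L \<Longrightarrow> spine L \<subseteq> {m. left_modular_elem L m}"
  shows "left_modular (double L C) \<longleftrightarrow> left_modular L \<and> C \<inter> spine L \<noteq> {}"
    and "left_modular (double L C) \<Longrightarrow> spine (double L C) \<subseteq> {m. left_modular_elem (double L C) m}"
proof -
  obtain a b where D: "interval_doubling L a b" and C: "C = interval_doubling.C L a b"
    using interval_doublingE[OF assms(1,2)] .
  interpret D: interval_doubling L a b by (rule D)
  show iff: "left_modular (double L C) \<longleftrightarrow> left_modular L \<and> C \<inter> spine L \<noteq> {}"
    using D.left_modular_L'_necessary D.left_modular_L'_sufficient(1) spine_lm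
    unfolding C D.L'_def[symmetric] by blast
  show "spine (double L C) \<subseteq> {m. left_modular_elem (double L C) m}" if "left_modular (double L C)"
    using D.left_modular_L'_sufficient(2) spine_lm iff that unfolding C D.L'_def[symmetric] by blast
qed

definition E0 :: "bool list poset" where "E0 = ({[]}, \<lambda>x y. True)"

lemma E_seq_Nil: "E_seq [] = E0"
  by (simp add: E_seq_def E0_def)

lemma E_seq_snoc: "E_seq (Cs @ [C]) = double (E_seq Cs) C"
  by (simp add: E_seq_def)

lemma carrier_E0: "carrier E0 = {[]}"
  by (simp add: E0_def carrier_def)

lemma finite_lattice_E0: "finite_lattice E0"
  by unfold_locales (auto simp: E0_def carrier_def leq_def)

lemma left_modular_elem_E0: "left_modular_elem E0 []"
  by (simp add: left_modular_elem_def carrier_E0)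

lemma left_modular_E0: "left_modular E0" and spine_E0: "spine E0 \<subseteq> {m. left_modular_elem E0 m}"
proof -
  have "maximal_chain E0 {[]}"
    unfolding maximal_chain_def is_chain_def by (auto simp: E0_def carrier_def leq_def)
  then show "left_modular E0" unfolding left_modular_def using left_modular_elem_E0 by blast
  have "spine E0 \<subseteq> carrier E0" unfolding spine_def is_chain_def by blast
  then show "spine E0 \<subseteq> {m. left_modular_elem E0 m}" using left_modular_elem_E0 carrier_E0 by auto
qed

lemma valid_seq_snocD:
  assumes "valid_seq (Cs @ [C])"
  shows "valid_seq Cs" and "is_interval (E_seq Cs) C"
proof -
  have "is_interval (E_seq (take i Cs)) (Cs ! i) \<and> Cs ! i \<noteq> {}" if "i < length Cs" for i
    using assms that unfolding valid_seq_def by (auto simp: nth_append dest: spec[of _ i])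
  then show "valid_seq Cs" unfolding valid_seq_def by blast
  show "is_interval (E_seq Cs) C"
    using assms unfolding valid_seq_def by (auto dest: spec[of _ "length Cs"])
qed

definition meets_spines :: "bool list set list \<Rightarrow> bool" where
  "meets_spines Cs \<longleftrightarrow> (\<forall>i<length Cs. Cs ! i \<inter> spine (E_seq (take i Cs)) \<noteq> {})"

lemma meets_spines_snoc: "meets_spines (Cs @ [C]) \<longleftrightarrow> meets_spines Cs \<and> C \<inter> spine (E_seq Cs) \<noteq> {}"
  unfolding meets_spines_def by (auto simp: nth_append less_Suc_eq)

lemma E_seq_left_modular_invariant:
  assumes "valid_seq Cs"
  shows "finite_lattice (E_seq Cs) \<and> (left_modular (E_seq Cs) \<longleftrightarrow> meets_spines Cs) \<and>
    (left_modular (E_seq Cs) \<longrightarrow> spine (E_seq Cs) \<subseteq> {m. left_modular_elem (E_seq Cs) m})"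
  using assms
proof (induction Cs rule: rev_induct)
  case Nil
  then show ?case
    using finite_lattice_E0 left_modular_E0 spine_E0 by (simp add: E_seq_Nil meets_spines_def)
next
  case (snoc C Cs)
  then have IH: "finite_lattice (E_seq Cs)" "left_modular (E_seq Cs) \<longleftrightarrow> meets_spines Cs"
      "left_modular (E_seq Cs) \<Longrightarrow> spine (E_seq Cs) \<subseteq> {m. left_modular_elem (E_seq Cs) m}"
    and C: "is_interval (E_seq Cs) C"
    using valid_seq_snocD by auto
  show ?case
    unfolding E_seq_snoc meets_spines_snoc
    using finite_lattice_double[OF IH(1) C] left_modular_double[OF IH(1) C IH(3)] IH(2) by blast
qed

theorem corollary3p21:
  assumes "valid_seq Cs"
  shows "left_modular (E_seq Cs) \<longleftrightarrow>
           (\<forall>i<length Cs. Cs ! i \<inter> spine (E_seq (take i Cs)) \<noteq> {})"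
  using E_seq_left_modular_invariant[OF assms] unfolding meets_spines_def by blast

end
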